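(* Let $\mathbb{Z}_{(p_n)}$ be an odometer with scale $(p_n)$ and let $m\in\mathbb{N}$. (i) If $\gcd(m,p_n)=1$ for all $n\in\mathbb{N}$, then $(\mathbb{Z}_{(p_n)},+\mathbf{m})$ is conjugate to $(\mathbb{Z}_{(p_n)},+\mathbf{1})$ and $\operatorname{Aut}(\mathbb{Z}_{(p_n)},+\mathbf{m})\cong\mathbb{Z}_{(p_n)}$. (ii) Suppose $\gcd(p_n,m)\neq1$ for some $n\in\mathbb{N}$. Let $m=a_1^{b_1}a_2^{b_2}\cdots a_l^{b_l}$ be the prime factorization of $m$, set $r_i=\min\{b_i,\mathbf{v}_{a_i}((p_n))\}$, $s=a_1^{r_1}\cdots a_l^{r_l}$ and $t=m/s$. Then there exists $k\in\mathbb{N}$ such that $s\mid p_k$ and $$\operatorname{Aut}(\mathbb{Z}_{(p_n)},+\mathbf{m})\subseteq\operatorname{Aut}(\mathbb{Z}_{(p_n)},+(t p_k)\mathbf{1})=\operatorname{Aut}(\mathbb{Z}_{(p_n)},+p_k\mathbf{1}).$$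
   Context: A scale is a sequence $(p_n)$ of positive integers with $p_n\mid p_{n+1}$, not eventually constant. The odometer is $\mathbb{Z}_{(p_n)}=\{(x_n)\in\prod_n\mathbb{Z}/p_n\mathbb{Z}: x_{n+1}\equiv x_n\bmod p_n\}$, a compact group; $\mathbf{1}=(1,1,\dots)$ and $\mathbf{m}=m\mathbf{1}$; $(\mathbb{Z}_{(p_n)},+\mathbf{m})$ denotes translation by $\mathbf{m}$. For a prime $p$, $\mathbf{v}_p((p_n))=\lim_n\nu_p(p_n)\in\mathbb{N}\cup\{0,\infty\}$ with $\nu_p$ the $p$-adic valuation. $\operatorname{Aut}(X,T)$ is the group of homeomorphisms of $X$ commuting with $T$. *)

theory Defs
  imports "HOL-Analysis.Analysis" "HOL-Algebra.Group" "HOL-Computational_Algebra.Primes"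
    "HOL-Library.Extended_Nat"
begin

definition is_scale :: "(nat \<Rightarrow> nat) \<Rightarrow> bool" where
  "is_scale p \<longleftrightarrow> (\<forall>n. 0 < p n) \<and> (\<forall>n. p n dvd p (Suc n)) \<and>
     \<not> (\<exists>N. \<forall>n\<ge>N. p n = p N)"

text \<open>The odometer, as a subspace of the product space nat => nat (product topology,
  each factor discrete); x n is the residue in Z/p_n Z, represented in {0..<p n}.\<close>
definition odometer :: "(nat \<Rightarrow> nat) \<Rightarrow> (nat \<Rightarrow> nat) set" where
  "odometer p = {x. \<forall>n. x n < p n \<and> x (Suc n) mod p n = x n}"

definition odometer_group :: "(nat \<Rightarrow> nat) \<Rightarrow> (nat \<Rightarrow> nat) monoid" where
  "odometer_group p = \<lparr>carrier = odometer p,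
     mult = (\<lambda>x y. (\<lambda>n. (x n + y n) mod p n)), one = (\<lambda>n. 0)\<rparr>"

definition transl :: "(nat \<Rightarrow> nat) \<Rightarrow> nat \<Rightarrow> (nat \<Rightarrow> nat) \<Rightarrow> (nat \<Rightarrow> nat)" where
  "transl p m x = (\<lambda>n. (x n + m) mod p n)"

definition Aut :: "'a::topological_space set \<Rightarrow> ('a \<Rightarrow> 'a) \<Rightarrow> ('a \<Rightarrow> 'a) set" where
  "Aut X T = {f \<in> extensional X. (\<exists>g. homeomorphism X X f g) \<and> (\<forall>x\<in>X. f (T x) = T (f x))}"

definition Aut_group :: "'a::topological_space set \<Rightarrow> ('a \<Rightarrow> 'a) \<Rightarrow> ('a \<Rightarrow> 'a) monoid" where
  "Aut_group X T = \<lparr>carrier = Aut X T, mult = (\<lambda>f g. compose X f g), one = restrict id X\<rparr>"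

text \<open>v_q((p_n)) = lim_n nu_q(p_n) in N \<union> {\<infinity>} (the sequence is nondecreasing).\<close>
definition vval :: "nat \<Rightarrow> (nat \<Rightarrow> nat) \<Rightarrow> enat" where
  "vval q p = (SUP n. enat (multiplicity q (p n)))"

end

theory Submission
  imports Defs "HOL-Number_Theory.Cong"
begin

text \<open>A continuous self-map of the odometer is, in each output coordinate, determined by a
  single input coordinate x N. Hence an automorphism commuting with translation by a also
  commutes with translation by every b with b \<equiv> j a (mod p N) solvable for all N, since
  such b is a limit of multiples of a. If m is coprime to every p n, all b qualify: every
  automorphism commutes with all translations and is therefore the translation by f 0, which
  gives Aut \<cong> Z_(p_n); multiplication by the odometer element m\<inverse> conjugates +m to +1.
  Otherwise, once k is so large that the exponents of the primes of m in p n have stabilised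
  (up to their exponent in m), s divides p k and t = m / s is a unit modulo every p N / p k,
  so t p k and p k generate the same closed subgroup, while t p k is a multiple of m.\<close>

lemma scale_pos: "is_scale p \<Longrightarrow> 0 < p n"
  unfolding is_scale_def by blast

lemma scale_dvd:
  assumes "is_scale p" "i \<le> j"
  shows "p i dvd p j"
  using assms(2)
proof (induction j rule: dec_induct)
  case (step j)
  then show ?case using assms(1) unfolding is_scale_def by (meson dvd_trans)
qed simp

lemma odometer_less: "x \<in> odometer p \<Longrightarrow> x n < p n"
  unfolding odometer_def by blast

lemma odometer_cong_Suc: "x \<in> odometer p \<Longrightarrow> [x (Suc n) = x n] (mod p n)"
  unfolding odometer_def cong_def by simp

lemma odometer_mod:
  assumes "is_scale p" "x \<in> odometer p" "i \<le> j"
  shows "x j mod p i = x i"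
  using assms(3)
proof (induction j rule: dec_induct)
  case base
  then show ?case using odometer_less[OF assms(2)] by simp
next
  case (step j)
  have "x (Suc j) mod p i = x (Suc j) mod p j mod p i"
    using scale_dvd[OF assms(1) step(1)] by (simp add: mod_mod_cancel)
  then show ?case using assms(2) step(3) unfolding odometer_def by simp
qed

lemma mod_in_odometer:
  assumes "is_scale p" "\<And>n. [g (Suc n) = g n] (mod p n)"
  shows "(\<lambda>n. g n mod p n) \<in> odometer p"
proof -
  have "g (Suc n) mod p (Suc n) mod p n = g n mod p n" for n
    using assms(2)[of n] scale_dvd[OF assms(1), of n "Suc n"]
    by (simp add: mod_mod_cancel cong_def)
  then show ?thesis using scale_pos[OF assms(1)] unfolding odometer_def by simp
qed

lemma zero_in_odometer: "is_scale p \<Longrightarrow> (\<lambda>n. 0) \<in> odometer p"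
  unfolding odometer_def using scale_pos by simp

lemma transl_in_odometer: "is_scale p \<Longrightarrow> x \<in> odometer p \<Longrightarrow> transl p b x \<in> odometer p"
  unfolding transl_def by (rule mod_in_odometer) (simp_all add: cong_add odometer_cong_Suc)

lemma transl_transl: "transl p a (transl p b x) = transl p (a + b) x"
  unfolding transl_def by (simp add: mod_add_right_eq add_ac)

lemma transl_0: "x \<in> odometer p \<Longrightarrow> transl p 0 x = x"
  unfolding transl_def using odometer_less by auto

definition odometer_add :: "(nat \<Rightarrow> nat) \<Rightarrow> (nat \<Rightarrow> nat) \<Rightarrow> (nat \<Rightarrow> nat) \<Rightarrow> nat \<Rightarrow> nat" where
  "odometer_add p a x = (\<lambda>n. (a n + x n) mod p n)"

definition odometer_neg :: "(nat \<Rightarrow> nat) \<Rightarrow> (nat \<Rightarrow> nat) \<Rightarrow> nat \<Rightarrow> nat" where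
  "odometer_neg p a = (\<lambda>n. (p n - a n) mod p n)"

definition odometer_scale :: "(nat \<Rightarrow> nat) \<Rightarrow> (nat \<Rightarrow> nat) \<Rightarrow> (nat \<Rightarrow> nat) \<Rightarrow> nat \<Rightarrow> nat" where
  "odometer_scale p c x = (\<lambda>n. (c n * x n) mod p n)"

lemma odometer_add_in_odometer:
  "is_scale p \<Longrightarrow> a \<in> odometer p \<Longrightarrow> x \<in> odometer p \<Longrightarrow> odometer_add p a x \<in> odometer p"
  unfolding odometer_add_def by (rule mod_in_odometer) (simp_all add: cong_add odometer_cong_Suc)

lemma odometer_neg_in_odometer:
  assumes "is_scale p" "a \<in> odometer p"
  shows "odometer_neg p a \<in> odometer p"
  unfolding odometer_neg_def
proof (rule mod_in_odometer[OF assms(1)])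
  fix n
  have "[p (Suc n) = p n] (mod p n)"
    using scale_dvd[OF assms(1), of n "Suc n"] by (simp add: cong_def)
  then show "[p (Suc n) - a (Suc n) = p n - a n] (mod p n)"
    using assms(2) by (intro cong_diff_nat) (auto simp: odometer_cong_Suc less_imp_le odometer_less)
qed

lemma odometer_scale_in_odometer:
  assumes "is_scale p" "\<And>n. [c (Suc n) = c n] (mod p n)" "x \<in> odometer p"
  shows "odometer_scale p c x \<in> odometer p"
  unfolding odometer_scale_def
  by (rule mod_in_odometer) (simp_all add: assms cong_mult odometer_cong_Suc)

lemma odometer_add_neg_left:
  assumes "a \<in> odometer p" "x \<in> odometer p"
  shows "odometer_add p (odometer_neg p a) (odometer_add p a x) = x"
proof
  fix n
  have "a n < p n" "x n < p n" using assms by (simp_all add: odometer_less)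
  then have "(p n - a n + (a n + x n)) mod p n = x n"
    by (simp add: add.assoc[symmetric])
  then show "odometer_add p (odometer_neg p a) (odometer_add p a x) n = x n"
    unfolding odometer_add_def odometer_neg_def by (simp add: mod_add_eq)
qed

lemma odometer_add_neg_right:
  assumes "a \<in> odometer p" "x \<in> odometer p"
  shows "odometer_add p a (odometer_add p (odometer_neg p a) x) = x"
proof
  fix n
  have "a n < p n" "x n < p n" using assms by (simp_all add: odometer_less)
  then have "(a n + (p n - a n + x n)) mod p n = x n"
    by (simp add: add.assoc[symmetric])
  then show "odometer_add p a (odometer_add p (odometer_neg p a) x) n = x n"
    unfolding odometer_add_def odometer_neg_def by (simp add: mod_add_left_eq mod_add_right_eq)
qed

lemma continuous_on_coordinatewise_map:
  "continuous_on S (\<lambda>x::nat \<Rightarrow> nat. \<lambda>n. F n (x n) :: nat)"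
proof (rule continuous_on_coordinatewise_then_product)
  fix n
  have "continuous_on S (F n \<circ> (\<lambda>x::nat \<Rightarrow> nat. x n))"
    by (rule continuous_on_compose)
      (auto intro: continuous_on_subset[OF continuous_on_product_coordinates])
  then show "continuous_on S (\<lambda>x. F n (x n))" by (simp add: o_def)
qed

lemma homeomorphism_odometer_add:
  assumes "is_scale p" "a \<in> odometer p"
  shows "homeomorphism (odometer p) (odometer p) (odometer_add p a) (odometer_add p (odometer_neg p a))"
proof (rule homeomorphismI)
  show "continuous_on (odometer p) (odometer_add p a)"
    "continuous_on (odometer p) (odometer_add p (odometer_neg p a))"
    unfolding odometer_add_def by (rule continuous_on_coordinatewise_map)+
qed (use assms odometer_add_in_odometer odometer_neg_in_odometer
      odometer_add_neg_left odometer_add_neg_right in auto)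

lemma odometer_add_in_Aut:
  assumes "is_scale p" "a \<in> odometer p"
  shows "restrict (odometer_add p a) (odometer p) \<in> Aut (odometer p) (transl p b)"
proof -
  have "homeomorphism (odometer p) (odometer p) (restrict (odometer_add p a) (odometer p))
      (odometer_add p (odometer_neg p a))"
    by (rule homeomorphism_cong[OF homeomorphism_odometer_add[OF assms]]) auto
  moreover have "odometer_add p a (transl p b x) = transl p b (odometer_add p a x)" for x
    unfolding odometer_add_def transl_def by (simp add: mod_add_left_eq mod_add_right_eq add_ac)
  ultimately show ?thesis
    using transl_in_odometer[OF assms(1)] unfolding Aut_def by auto
qed

lemma continuous_on_coordinate_locally_constant:
  fixes f :: "(nat \<Rightarrow> nat) \<Rightarrow> nat \<Rightarrow> nat"
  assumes "continuous_on S f" "y \<in> S"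
  shows "\<exists>N. \<forall>z\<in>S. (\<forall>i\<le>N. z i = y i) \<longrightarrow> f z n = f y n"
proof -
  have "continuous_on S (\<lambda>x. f x n)"
    using assms(1) by (rule continuous_on_product_then_coordinatewise)
  then obtain A where A: "open A" "A \<inter> S = (\<lambda>x. f x n) -` {f y n} \<inter> S"
    unfolding continuous_on_open_invariant by (meson open_discrete)
  have "openin (product_topology (\<lambda>i. euclidean) UNIV) A" "y \<in> A"
    using A assms(2) by (auto simp: open_fun_def)
  from product_topology_open_contains_basis[OF this] obtain X where
    X: "y \<in> (\<Pi>\<^sub>E i\<in>UNIV. X i)" "finite {i. X i \<noteq> topspace (euclidean :: nat topology)}"
       "(\<Pi>\<^sub>E i\<in>UNIV. X i) \<subseteq> A"
    by blast
  from X(2) obtain N where N: "\<forall>i\<in>{i. X i \<noteq> UNIV}. i \<le> N"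
    using finite_nat_set_iff_bounded_le by auto
  have "f z n = f y n" if "z \<in> S" "\<forall>i\<le>N. z i = y i" for z
  proof -
    have "z \<in> (\<Pi>\<^sub>E i\<in>UNIV. X i)"
      using X(1) N that(2) by (force simp: PiE_iff)
    then show ?thesis using X(3) A(2) that(1) by blast
  qed
  then show ?thesis by blast
qed

lemma eventually_odometer_coordinate_determines:
  fixes f :: "(nat \<Rightarrow> nat) \<Rightarrow> nat \<Rightarrow> nat"
  assumes "is_scale p" "continuous_on (odometer p) f" "x \<in> odometer p"
  shows "\<forall>\<^sub>F N in sequentially. \<forall>z\<in>odometer p. z N = x N \<longrightarrow> f z n = f x n"
proof -
  obtain N0 where N0: "\<forall>z\<in>odometer p. (\<forall>i\<le>N0. z i = x i) \<longrightarrow> f z n = f x n"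
    using continuous_on_coordinate_locally_constant[OF assms(2,3)] by blast
  have "\<forall>z\<in>odometer p. z N = x N \<longrightarrow> f z n = f x n" if "N \<ge> N0" for N
    using N0 that odometer_mod[OF assms(1) assms(3), of _ N] odometer_mod[OF assms(1), of _ _ N]
    by (metis le_trans)
  then show ?thesis unfolding eventually_sequentially by blast
qed

lemma Aut_in: "f \<in> Aut X T \<Longrightarrow> x \<in> X \<Longrightarrow> f x \<in> X"
  unfolding Aut_def homeomorphism_def by blast

lemma Aut_continuous_on: "f \<in> Aut X T \<Longrightarrow> continuous_on X f"
  unfolding Aut_def homeomorphism_def by blast

lemma Aut_transl_commute_mult:
  assumes "is_scale p" "f \<in> Aut (odometer p) (transl p a)" "x \<in> odometer p"
  shows "f (transl p (j * a) x) = transl p (j * a) (f x)"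
proof (induction j)
  case 0
  then show ?case using assms(3) Aut_in[OF assms(2,3)] by (simp add: transl_0)
next
  case (Suc j)
  have "f (transl p (Suc j * a) x) = f (transl p a (transl p (j * a) x))"
    by (simp add: transl_transl)
  also have "\<dots> = transl p a (f (transl p (j * a) x))"
    using assms(2) transl_in_odometer[OF assms(1,3)] unfolding Aut_def by blast
  also have "\<dots> = transl p (Suc j * a) (f x)"
    using Suc by (simp add: transl_transl)
  finally show ?case .
qed

lemma Aut_transl_subset_mult:
  "is_scale p \<Longrightarrow> Aut (odometer p) (transl p a) \<subseteq> Aut (odometer p) (transl p (j * a))"
  using Aut_transl_commute_mult unfolding Aut_def by blast

lemma Aut_transl_subset_of_cong:
  assumes "is_scale p" and mult: "\<And>N. \<exists>j. [j * a = b] (mod p N)"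
  shows "Aut (odometer p) (transl p a) \<subseteq> Aut (odometer p) (transl p b)"
proof
  fix f assume f: "f \<in> Aut (odometer p) (transl p a)"
  have "f (transl p b x) n = transl p b (f x) n" if x: "x \<in> odometer p" for x n
  proof -
    define y where "y = transl p b x"
    have y: "y \<in> odometer p"
      unfolding y_def using transl_in_odometer[OF assms(1) x] .
    have "\<forall>\<^sub>F N in sequentially. n \<le> N \<and> (\<forall>z\<in>odometer p. z N = y N \<longrightarrow> f z n = f y n)"
      using eventually_odometer_coordinate_determines[OF assms(1) Aut_continuous_on[OF f] y]
      by (simp add: eventually_conj_iff eventually_ge_at_top)
    then obtain N where N: "n \<le> N" "\<forall>z\<in>odometer p. z N = y N \<longrightarrow> f z n = f y n"
      using eventually_sequentially by auto
    obtain j where j: "[j * a = b] (mod p N)" using mult by blast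
    then have "transl p (j * a) x N = y N"
      unfolding y_def transl_def cong_def by (metis mod_add_right_eq)
    then have "f y n = f (transl p (j * a) x) n"
      using N(2) transl_in_odometer[OF assms(1) x] by simp
    also have "\<dots> = (f x n + j * a) mod p n"
      using Aut_transl_commute_mult[OF assms(1) f x] by (simp add: transl_def)
    also have "\<dots> = (f x n + b) mod p n"
      using cong_dvd_modulus_nat[OF j scale_dvd[OF assms(1) N(1)]]
      unfolding cong_def by (metis mod_add_right_eq)
    finally show ?thesis unfolding y_def transl_def .
  qed
  then show "f \<in> Aut (odometer p) (transl p b)" using f unfolding Aut_def by blast
qed

lemma Aut_transl_coprime_subset:
  assumes "is_scale p" "\<forall>n. coprime m (p n)"
  shows "Aut (odometer p) (transl p m) \<subseteq> Aut (odometer p) (transl p b)"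
proof (rule Aut_transl_subset_of_cong[OF assms(1)])
  fix N
  obtain u where "[m * u = Suc 0] (mod p N)"
    using cong_solve_coprime_nat assms(2) by blast
  then have "[u * b * m = b] (mod p N)"
    using cong_scalar_right[of "m * u" "Suc 0" "p N" b] by (simp add: ac_simps)
  then show "\<exists>j. [j * m = b] (mod p N)" by blast
qed

text \<open>x is the limit of the integers x N, and f (x N) = f 0 + x N.\<close>
lemma Aut_transl_coprime_eq_add:
  assumes "is_scale p" "\<forall>n. coprime m (p n)" "f \<in> Aut (odometer p) (transl p m)"
    and x: "x \<in> odometer p"
  shows "f x = odometer_add p (f (\<lambda>n. 0)) x"
proof
  fix n
  have zero: "(\<lambda>n. 0) \<in> odometer p"
    using zero_in_odometer[OF assms(1)] .
  have "\<forall>\<^sub>F N in sequentially. n \<le> N \<and> (\<forall>z\<in>odometer p. z N = x N \<longrightarrow> f z n = f x n)"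
    using eventually_odometer_coordinate_determines[OF assms(1) Aut_continuous_on[OF assms(3)] x]
    by (simp add: eventually_conj_iff eventually_ge_at_top)
  then obtain N where N: "n \<le> N" "\<forall>z\<in>odometer p. z N = x N \<longrightarrow> f z n = f x n"
    using eventually_sequentially by auto
  define z where "z = transl p (x N) (\<lambda>n. 0)"
  have z: "z \<in> odometer p"
    unfolding z_def using transl_in_odometer[OF assms(1) zero] .
  have "z N = x N"
    unfolding z_def transl_def using odometer_less[OF x] by simp
  then have "f x n = f z n" using N(2) z by simp
  also have "f z = transl p (x N) (f (\<lambda>n. 0))"
    using Aut_transl_coprime_subset[OF assms(1,2)] assms(3) zero unfolding z_def Aut_def by blast
  also have "\<dots> n = (f (\<lambda>n. 0) n + x N) mod p n"
    unfolding transl_def ..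
  also have "\<dots> = (f (\<lambda>n. 0) n + x n) mod p n"
    using odometer_mod[OF assms(1) x N(1)] by (metis mod_add_right_eq)
  finally show "f x n = odometer_add p (f (\<lambda>n. 0)) x n"
    unfolding odometer_add_def .
qed

lemma Aut_group_transl_coprime_iso:
  assumes "is_scale p" "\<forall>n. coprime m (p n)"
  shows "Aut_group (odometer p) (transl p m) \<cong> odometer_group p"
proof -
  let ?A = "Aut (odometer p) (transl p m)"
  define zero :: "nat \<Rightarrow> nat" where "zero = (\<lambda>n. 0)"
  have zero: "zero \<in> odometer p"
    unfolding zero_def using zero_in_odometer[OF assms(1)] .
  have eq_add: "f x = odometer_add p (f zero) x" if "f \<in> ?A" "x \<in> odometer p" for f x
    unfolding zero_def using Aut_transl_coprime_eq_add[OF assms that] .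
  have "(\<lambda>f. f zero) \<in> hom (Aut_group (odometer p) (transl p m)) (odometer_group p)"
  proof (rule homI)
    fix f assume "f \<in> carrier (Aut_group (odometer p) (transl p m))"
    then show "f zero \<in> carrier (odometer_group p)"
      using Aut_in[OF _ zero] by (simp add: Aut_group_def odometer_group_def)
  next
    fix f g assume "f \<in> carrier (Aut_group (odometer p) (transl p m))"
      "g \<in> carrier (Aut_group (odometer p) (transl p m))"
    then have "f \<in> ?A" "g \<in> ?A" by (simp_all add: Aut_group_def)
    then have "compose (odometer p) f g zero = odometer_add p (f zero) (g zero)"
      using zero eq_add[OF _ Aut_in[OF _ zero]] by (simp add: compose_def)
    then show "(f \<otimes>\<^bsub>Aut_group (odometer p) (transl p m)\<^esub> g) zero =
        f zero \<otimes>\<^bsub>odometer_group p\<^esub> g zero"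
      by (simp add: Aut_group_def odometer_group_def odometer_add_def)
  qed
  moreover have "bij_betw (\<lambda>f. f zero) ?A (odometer p)"
  proof (rule bij_betw_imageI)
    show "inj_on (\<lambda>f. f zero) ?A"
    proof (rule inj_onI)
      fix f g assume fg: "f \<in> ?A" "g \<in> ?A" "f zero = g zero"
      have "f \<in> extensional (odometer p)" "g \<in> extensional (odometer p)"
        using fg(1,2) by (simp_all add: Aut_def)
      moreover have "f x = g x" if "x \<in> odometer p" for x
        using eq_add[OF fg(1) that] eq_add[OF fg(2) that] fg(3) by simp
      ultimately show "f = g" by (rule extensionalityI)
    qed
    show "(\<lambda>f. f zero) ` ?A = odometer p"
    proof (intro equalityI subsetI)
      fix a assume a: "a \<in> odometer p"
      have "a = restrict (odometer_add p a) (odometer p) zero"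
        using zero odometer_less[OF a] by (auto simp: zero_def odometer_add_def)
      then show "a \<in> (\<lambda>f. f zero) ` ?A"
        by (rule rev_image_eqI[OF odometer_add_in_Aut[OF assms(1) a]])
    qed (use Aut_in zero in auto)
  qed
  ultimately have "(\<lambda>f. f zero) \<in> iso (Aut_group (odometer p) (transl p m)) (odometer_group p)"
    by (simp add: iso_def Aut_group_def odometer_group_def)
  then show ?thesis unfolding is_iso_def by blast
qed

lemma transl_coprime_conjugate:
  assumes "is_scale p" "\<forall>n. coprime m (p n)"
  shows "\<exists>h g. homeomorphism (odometer p) (odometer p) h g \<and>
           (\<forall>x\<in>odometer p. h (transl p m x) = transl p 1 (h x))"
proof -
  have "\<forall>n. \<exists>v. [m * v = 1] (mod p n)"
    using cong_solve_coprime_nat assms(2) by simp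
  then obtain u where u: "\<And>n. [m * u n = 1] (mod p n)" by metis
  have u_Suc: "[u (Suc n) = u n] (mod p n)" for n
  proof -
    have "[m * u (Suc n) = 1] (mod p n)"
      using cong_dvd_modulus_nat[OF u[of "Suc n"] scale_dvd[OF assms(1), of n "Suc n"]] by simp
    then have "[m * u (Suc n) = m * u n] (mod p n)"
      using u[of n] by (metis cong_sym cong_trans)
    then show ?thesis using cong_mult_lcancel_nat assms(2) by blast
  qed
  define h where "h = odometer_scale p u"
  define g where "g = odometer_scale p (\<lambda>n. m)"
  have inverse: "odometer_scale p c (odometer_scale p d x) = x"
    if "x \<in> odometer p" "\<And>n. [c n * d n = 1] (mod p n)" for c d x
  proof
    fix n
    have "[c n * d n * x n = 1 * x n] (mod p n)"
      using that(2) by (rule cong_scalar_right)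
    then show "odometer_scale p c (odometer_scale p d x) n = x n"
      using odometer_less[OF that(1)]
      by (simp add: odometer_scale_def cong_def mod_mult_right_eq mult.assoc)
  qed
  have "homeomorphism (odometer p) (odometer p) h g"
  proof (rule homeomorphismI)
    show "continuous_on (odometer p) h" "continuous_on (odometer p) g"
      unfolding h_def g_def odometer_scale_def by (rule continuous_on_coordinatewise_map)+
    show "h ` odometer p \<subseteq> odometer p" "g ` odometer p \<subseteq> odometer p"
      unfolding h_def g_def using odometer_scale_in_odometer[OF assms(1)] u_Suc by auto
    show "g (h x) = x" "h (g x) = x" if "x \<in> odometer p" for x
      unfolding h_def g_def using inverse[OF that] u by (simp_all add: mult.commute)
  qed
  moreover have "h (transl p m x) = transl p 1 (h x)" for x
  proof
    fix n
    have "[u n * x n + u n * m = u n * x n + 1] (mod p n)"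
      using u[of n] by (intro cong_add) (simp_all add: ac_simps)
    then have "[u n * (x n + m) = u n * x n + 1] (mod p n)"
      by (simp add: algebra_simps)
    then show "h (transl p m x) n = transl p 1 (h x) n"
      by (simp add: h_def odometer_scale_def transl_def cong_def mod_add_left_eq mod_mult_right_eq mod_Suc_eq)
  qed
  ultimately show ?thesis by blast
qed


lemma multiplicity_scale_mono:
  assumes "is_scale p" "i \<le> j"
  shows "multiplicity q (p i) \<le> multiplicity q (p j)"
  using dvd_imp_multiplicity_le[OF scale_dvd[OF assms]] scale_pos[OF assms(1), of j] by simp

lemma multiplicity_le_vval: "enat (multiplicity q (p n)) \<le> vval q p"
  unfolding vval_def by (rule SUP_upper) simp

lemma eventually_multiplicity_ge:
  assumes "is_scale p" "enat e \<le> vval q p"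
  shows "\<forall>\<^sub>F n in sequentially. e \<le> multiplicity q (p n)"
proof (cases "e = 0")
  case False
  then have "enat (e - 1) < enat e" by simp
  then have "enat (e - 1) < vval q p"
    using assms(2) by (rule order_less_le_trans)
  then obtain k where "enat (e - 1) < enat (multiplicity q (p k))"
    unfolding vval_def by (auto simp: less_SUP_iff)
  then have "e \<le> multiplicity q (p k)" using False by simp
  then show ?thesis
    unfolding eventually_sequentially using multiplicity_scale_mono[OF assms(1)] le_trans by blast
qed simp

lemma eventually_multiplicity_min:
  fixes p :: "nat \<Rightarrow> nat" and q b :: nat
  assumes "is_scale p"
  defines "e \<equiv> the_enat (min (enat b) (vval q p))"
  shows "e \<le> b"
    and "\<forall>\<^sub>F n in sequentially. e \<le> multiplicity q (p n) \<and> (e < b \<longrightarrow> multiplicity q (p n) = e)"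
proof -
  have "e \<le> b \<and> (\<forall>\<^sub>F n in sequentially. e \<le> multiplicity q (p n) \<and> (e < b \<longrightarrow> multiplicity q (p n) = e))"
  proof (cases "enat b \<le> vval q p")
    case True
    then have "e = b" by (simp add: e_def min_absorb1)
    then show ?thesis using eventually_multiplicity_ge[OF assms(1) True] by simp
  next
    case False
    then have vval: "vval q p = enat e" "e < b"
      by (cases "vval q p"; simp add: e_def)+
    have le: "multiplicity q (p n) \<le> e" for n
      using multiplicity_le_vval[of q p n] vval(1) by simp
    have "\<forall>\<^sub>F n in sequentially. e \<le> multiplicity q (p n)"
      using vval(1) by (intro eventually_multiplicity_ge[OF assms(1)]) simp
    then have "\<forall>\<^sub>F n in sequentially. e \<le> multiplicity q (p n) \<and> (e < b \<longrightarrow> multiplicity q (p n) = e)"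
      by (rule eventually_mono) (use le in \<open>auto intro: le_antisym\<close>)
    then show ?thesis using vval(2) by simp
  qed
  then show "e \<le> b"
    and "\<forall>\<^sub>F n in sequentially. e \<le> multiplicity q (p n) \<and> (e < b \<longrightarrow> multiplicity q (p n) = e)"
    by blast+
qed

lemma scale_cofactor_coprime:
  fixes p :: "nat \<Rightarrow> nat" and m :: nat
  assumes "is_scale p" "0 < m"
  defines "s \<equiv> \<Prod>q\<in>prime_factors m. q ^ the_enat (min (enat (multiplicity q m)) (vval q p))"
  shows "s dvd m" and "\<exists>k. s dvd p k \<and> (\<forall>N\<ge>k. coprime (m div s) (p N div p k))"
proof -
  define e where "e q = the_enat (min (enat (multiplicity q m)) (vval q p))" for q
  have s0: "s \<noteq> 0"
    unfolding s_def by (auto simp: prime_gt_0_nat)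
  have mult_s: "multiplicity q s = (if q \<in> prime_factors m then e q else 0)" if "prime q" for q
    unfolding s_def e_def by (rule multiplicity_prod_prime_powers) (use that in auto)
  show "s dvd m"
  proof (rule multiplicity_le_imp_dvd[OF s0])
    fix q :: nat assume "prime q"
    then show "multiplicity q s \<le> multiplicity q m"
      using mult_s eventually_multiplicity_min(1)[OF assms(1)] by (simp add: e_def)
  qed
  then have m: "m = s * (m div s)" by simp
  have "\<forall>\<^sub>F n in sequentially. \<forall>q\<in>prime_factors m.
      e q \<le> multiplicity q (p n) \<and> (e q < multiplicity q m \<longrightarrow> multiplicity q (p n) = e q)"
    unfolding e_def by (intro eventually_ball_finite ballI eventually_multiplicity_min(2)[OF assms(1)]) simp
  then obtain k where k: "\<And>n q. n \<ge> k \<Longrightarrow> q \<in> prime_factors m \<Longrightarrow>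
      e q \<le> multiplicity q (p n) \<and> (e q < multiplicity q m \<longrightarrow> multiplicity q (p n) = e q)"
    unfolding eventually_sequentially by blast
  have "s dvd p k"
    by (rule multiplicity_le_imp_dvd[OF s0]) (use mult_s k in auto)
  moreover have "coprime (m div s) (p N div p k)" if N: "N \<ge> k" for N
  proof (rule ccontr)
    define d where "d = p N div p k"
    have pN: "p N = p k * d"
      unfolding d_def using scale_dvd[OF assms(1) N] by simp
    have nonzero: "m div s \<noteq> 0" "d \<noteq> 0" "p k \<noteq> 0"
      using m assms(2) pN scale_pos[OF assms(1)] by (metis mult_0_right neq0_conv)+
    assume "\<not> coprime (m div s) (p N div p k)"
    then obtain q where q: "prime q" "q dvd m div s" "q dvd d"
      using prime_factor_nat[of "gcd (m div s) d"] by (auto simp: d_def coprime_iff_gcd_eq_1)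
    have "q dvd m"
      using q(2) m by (metis dvd_triv_right dvd_trans)
    then have "q \<in> prime_factors m"
      using q(1) assms(2) by (simp add: in_prime_factors_iff)
    moreover have "multiplicity q m = multiplicity q s + multiplicity q (m div s)"
      using m q(1) s0 nonzero(1) by (metis prime_elem_multiplicity_mult_distrib prime_imp_prime_elem)
    moreover have "0 < multiplicity q (m div s)" "0 < multiplicity q d"
      using q nonzero by (simp_all add: prime_multiplicity_gt_zero_iff)
    ultimately have "multiplicity q (p N) = multiplicity q (p k)"
      using k[OF N] k[of k] mult_s[OF q(1)] by simp
    moreover have "multiplicity q (p N) = multiplicity q (p k) + multiplicity q d"
      using pN q(1) nonzero by (simp add: prime_elem_multiplicity_mult_distrib)
    ultimately show False using \<open>0 < multiplicity q d\<close> by simp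
  qed
  ultimately show "\<exists>k. s dvd p k \<and> (\<forall>N\<ge>k. coprime (m div s) (p N div p k))" by blast
qed

lemma Aut_transl_cofactor_eq:
  assumes "is_scale p" "\<forall>N\<ge>k. coprime t (p N div p k)"
  shows "Aut (odometer p) (transl p (t * p k)) = Aut (odometer p) (transl p (p k))"
proof
  show "Aut (odometer p) (transl p (p k)) \<subseteq> Aut (odometer p) (transl p (t * p k))"
    by (rule Aut_transl_subset_mult[OF assms(1)])
  show "Aut (odometer p) (transl p (t * p k)) \<subseteq> Aut (odometer p) (transl p (p k))"
  proof (rule Aut_transl_subset_of_cong[OF assms(1)])
    fix N
    show "\<exists>j. [j * (t * p k) = p k] (mod p N)"
    proof (cases "N \<le> k")
      case True
      then have "[0 * (t * p k) = p k] (mod p N)"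
        using scale_dvd[OF assms(1)] by (simp add: cong_def)
      then show ?thesis by blast
    next
      case False
      define d where "d = p N div p k"
      have pN: "p N = p k * d"
        unfolding d_def using scale_dvd[OF assms(1), of k N] False by simp
      obtain v where "[t * v = 1] (mod d)"
        using cong_solve_coprime_nat assms(2) False unfolding d_def by fastforce
      then have "[p k * (t * v) = p k * 1] (mod p k * d)"
        by (simp add: cong_def mod_mult_mult1 del: mult_1_right)
      then have "[v * (t * p k) = p k] (mod p N)"
        unfolding pN by (simp add: ac_simps)
      then show ?thesis by blast
    qed
  qed
qed

theorem proposition3p1:
  fixes p :: "nat \<Rightarrow> nat" and m :: nat
  assumes "is_scale p" and "0 < m"
  shows "((\<forall>n. coprime m (p n)) \<longrightarrow>
           (\<exists>h g. homeomorphism (odometer p) (odometer p) h g \<and>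
                  (\<forall>x\<in>odometer p. h (transl p m x) = transl p 1 (h x))) \<and>
           Aut_group (odometer p) (transl p m) \<cong> odometer_group p)
       \<and> ((\<exists>n. \<not> coprime (p n) m) \<longrightarrow>
           (let s = (\<Prod>q\<in>prime_factors m.
                       q ^ the_enat (min (enat (multiplicity q m)) (vval q p)));
                t = m div s
            in \<exists>k. s dvd p k \<and>
                   Aut (odometer p) (transl p m) \<subseteq> Aut (odometer p) (transl p (t * p k)) \<and>
                   Aut (odometer p) (transl p (t * p k)) = Aut (odometer p) (transl p (p k))))"
proof (intro conjI impI)
  assume "\<forall>n. coprime m (p n)"
  then show "\<exists>h g. homeomorphism (odometer p) (odometer p) h g \<and>
      (\<forall>x\<in>odometer p. h (transl p m x) = transl p 1 (h x))"
    and "Aut_group (odometer p) (transl p m) \<cong> odometer_group p"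
    using transl_coprime_conjugate Aut_group_transl_coprime_iso assms(1) by blast+
next
  define s where "s = (\<Prod>q\<in>prime_factors m. q ^ the_enat (min (enat (multiplicity q m)) (vval q p)))"
  obtain k where k: "s dvd p k" "\<forall>N\<ge>k. coprime (m div s) (p N div p k)"
    using scale_cofactor_coprime(2)[OF assms] unfolding s_def by blast
  have "s dvd m"
    using scale_cofactor_coprime(1)[OF assms] unfolding s_def .
  then have "m div s * p k = p k div s * m"
    using k(1) by (metis div_mult_swap mult.commute)
  then have "Aut (odometer p) (transl p m) \<subseteq> Aut (odometer p) (transl p (m div s * p k))"
    using Aut_transl_subset_mult[OF assms(1), of m "p k div s"] by simp
  then have "\<exists>k. s dvd p k \<and>
      Aut (odometer p) (transl p m) \<subseteq> Aut (odometer p) (transl p (m div s * p k)) \<and>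
      Aut (odometer p) (transl p (m div s * p k)) = Aut (odometer p) (transl p (p k))"
    using k Aut_transl_cofactor_eq[OF assms(1) k(2)] by blast
  then show "let s = s; t = m div s in \<exists>k. s dvd p k \<and>
      Aut (odometer p) (transl p m) \<subseteq> Aut (odometer p) (transl p (t * p k)) \<and>
      Aut (odometer p) (transl p (t * p k)) = Aut (odometer p) (transl p (p k))"
    unfolding Let_def .
qed

end
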